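(* The vector fields $Y^n_1,\dots,Y^n_{n-1}$ have polynomial coefficients, are Lie symmetries of the ladder system, are linearly independent over $\mathbf{C}$, and pairwise commute; thus they span an $(n-1)$-dimensional Abelian Lie algebra of polynomial Lie symmetries of the ladder system (so the ladder system is integrable by quadrature).
   Context: Coordinates $x=(x_1,\dots,x_n)\in\mathbf{C}^n$, $n\ge2$. The ladder system is the HLV system $\dot x_i = x_i\sum_{j=1}^n (1+i-j)x_j$, identified with the vector field $X_f=\sum_i x_i\big(\sum_j (1+i-j)x_j\big)\partial/\partial x_i$. A vector field $X$ is a Lie symmetry if $[X_f,X]=0$. Notation: $u=\sum_{j=1}^n x_j$, $D=\sum_{j=1}^n x_j\,\partial/\partial x_j$, and $Y^l_m = x_m u^{l-m-1}\big(D-u\,\partial/\partial x_l\big)$ for $l,m\in\{1,\dots,n\}$. *)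

theory Defs
  imports "HOL-Analysis.Analysis"
begin

text \<open>Points of C^n are modelled as functions x :: nat => complex, of which only the
coordinates x 1, ..., x n are used.  A vector field on C^n is a function
V :: nat => (nat => complex) => complex, where V i is the coefficient of d/dx_i
(only i in {1..n} is relevant).\<close>

type_synonym pt = "nat \<Rightarrow> complex"
type_synonym vfield = "nat \<Rightarrow> pt \<Rightarrow> complex"

inductive poly_fun :: "nat \<Rightarrow> (pt \<Rightarrow> complex) \<Rightarrow> bool" for n :: nat where
  pf_const: "poly_fun n (\<lambda>x. c)"
| pf_var: "j \<in> {1..n} \<Longrightarrow> poly_fun n (\<lambda>x. x j)"
| pf_add: "poly_fun n f \<Longrightarrow> poly_fun n g \<Longrightarrow> poly_fun n (\<lambda>x. f x + g x)"
| pf_mult: "poly_fun n f \<Longrightarrow> poly_fun n g \<Longrightarrow> poly_fun n (\<lambda>x. f x * g x)"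

definition pdiff :: "nat \<Rightarrow> (pt \<Rightarrow> complex) \<Rightarrow> pt \<Rightarrow> complex" where
  "pdiff j f x = deriv (\<lambda>t. f (x(j := t))) (x j)"

definition lie_bracket :: "nat \<Rightarrow> vfield \<Rightarrow> vfield \<Rightarrow> vfield" where
  "lie_bracket n X Y i x = (\<Sum>j=1..n. X j x * pdiff j (Y i) x - Y j x * pdiff j (X i) x)"

definition commute :: "nat \<Rightarrow> vfield \<Rightarrow> vfield \<Rightarrow> bool" where
  "commute n X Y \<longleftrightarrow> (\<forall>i\<in>{1..n}. \<forall>x. lie_bracket n X Y i x = 0)"

definition polynomial_vfield :: "nat \<Rightarrow> vfield \<Rightarrow> bool" where
  "polynomial_vfield n V \<longleftrightarrow> (\<forall>i\<in>{1..n}. poly_fun n (V i))"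

definition usum :: "nat \<Rightarrow> pt \<Rightarrow> complex" where
  "usum n x = (\<Sum>j=1..n. x j)"

definition ladder :: "nat \<Rightarrow> vfield" where
  "ladder n i x = x i * (\<Sum>j=1..n. of_int (1 + int i - int j) * x j)"

text \<open>Y^l_m = x_m u^(l-m-1) (D - u d/dx_l), where D = sum_j x_j d/dx_j
  (used only for m < l, so that the exponent is a natural number).\<close>
definition Yf :: "nat \<Rightarrow> nat \<Rightarrow> nat \<Rightarrow> vfield" where
  "Yf n l m i x = x m * usum n x ^ (l - m - 1) *
      (x i - usum n x * (if i = l then 1 else 0))"

definition lin_indep_vfields :: "nat \<Rightarrow> nat \<Rightarrow> (nat \<Rightarrow> vfield) \<Rightarrow> bool" where
  "lin_indep_vfields n k V \<longleftrightarrow>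
     (\<forall>c :: nat \<Rightarrow> complex.
        (\<forall>i\<in>{1..n}. \<forall>x. (\<Sum>m=1..k. c m * V m i x) = 0) \<longrightarrow> (\<forall>m\<in>{1..k}. c m = 0))"

end

(*
  Write E = D - u d/dx_l and phi_m = x_m u^(l-m-1), so that Y^l_m = phi_m E.  The field E
  annihilates u and fixes every x_m with m <> l, hence E phi_m = phi_m, and therefore
  [phi_a E, phi_b E] = (phi_a E phi_b - phi_b E phi_a) E = 0.
  For the ladder field X one has X u = u^2 and X x_m = x_m ((1+m) u - w) with w = sum_j j x_j,
  so X phi_m = (l u - w) phi_m; a direct computation gives [X, E] = (w - l u) E, and so
  [X, phi_m E] = (X phi_m) E + phi_m [X, E] = 0.
  All of this only uses the product and power rules for derivatives of polynomial functions.
  Linear independence: at the k-th unit vector u = 1, and the k-th component of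
  sum_m c_m Y^l_m there is c_k.
*)
theory Submission
  imports Defs
begin

lemma poly_fun_diff: "poly_fun n f \<Longrightarrow> poly_fun n g \<Longrightarrow> poly_fun n (\<lambda>x. f x - g x)"
  using pf_add[OF _ pf_mult[OF pf_const[of n "-1"]], of f g] by simp

lemma poly_fun_power: "poly_fun n f \<Longrightarrow> poly_fun n (\<lambda>x. f x ^ k)"
  by (induction k) (auto intro: pf_mult pf_const)

lemma poly_fun_sum: "(\<And>k. k \<in> A \<Longrightarrow> poly_fun n (f k)) \<Longrightarrow> poly_fun n (\<lambda>x. \<Sum>k\<in>A. f k x)"
  by (induction A rule: infinite_finite_induct) (auto intro: pf_add pf_const)

lemma poly_fun_field_differentiable:
  "poly_fun n f \<Longrightarrow> (\<lambda>t. f (x(j := t))) field_differentiable (at s)"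
proof (induction rule: poly_fun.induct)
  case (pf_var k)
  then show ?case by (cases "k = j") auto
qed (auto intro: field_differentiable_add field_differentiable_mult)

lemma has_field_derivative_pdiff:
  "poly_fun n f \<Longrightarrow> ((\<lambda>t. f (x(j := t))) has_field_derivative pdiff j f x) (at (x j))"
  unfolding pdiff_def by (simp add: DERIV_deriv_iff_field_differentiable poly_fun_field_differentiable)

lemma pdiff_const [simp]: "pdiff j (\<lambda>x. c) x = 0"
  by (simp add: pdiff_def)

lemma pdiff_coord: "pdiff j (\<lambda>x. x k) x = (if k = j then 1 else 0)"
  by (cases "k = j") (simp_all add: pdiff_def)

lemma pdiff_add:
  "poly_fun n f \<Longrightarrow> poly_fun n g \<Longrightarrow> pdiff j (\<lambda>x. f x + g x) x = pdiff j f x + pdiff j g x"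
  unfolding pdiff_def[of j "\<lambda>x. f x + g x"]
  by (intro DERIV_imp_deriv DERIV_add has_field_derivative_pdiff)

lemma pdiff_diff:
  "poly_fun n f \<Longrightarrow> poly_fun n g \<Longrightarrow> pdiff j (\<lambda>x. f x - g x) x = pdiff j f x - pdiff j g x"
  unfolding pdiff_def[of j "\<lambda>x. f x - g x"]
  by (intro DERIV_imp_deriv DERIV_diff has_field_derivative_pdiff)

lemma pdiff_mult:
  assumes "poly_fun n f" "poly_fun n g"
  shows "pdiff j (\<lambda>x. f x * g x) x = pdiff j f x * g x + f x * pdiff j g x"
  unfolding pdiff_def[of j "\<lambda>x. f x * g x"]
  using DERIV_mult[OF has_field_derivative_pdiff[OF assms(1), of x j]
      has_field_derivative_pdiff[OF assms(2), of x j]]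
  by (intro DERIV_imp_deriv) (simp add: algebra_simps)

lemma pdiff_power:
  assumes "poly_fun n f"
  shows "pdiff j (\<lambda>x. f x ^ k) x = of_nat k * f x ^ (k - 1) * pdiff j f x"
  unfolding pdiff_def[of j "\<lambda>x. f x ^ k"]
  using DERIV_power[OF has_field_derivative_pdiff[OF assms], of x j k]
  by (intro DERIV_imp_deriv) (simp add: algebra_simps)

lemma pdiff_sum:
  "(\<And>k. k \<in> A \<Longrightarrow> poly_fun n (f k)) \<Longrightarrow>
    pdiff j (\<lambda>x. \<Sum>k\<in>A. f k x) x = (\<Sum>k\<in>A. pdiff j (f k) x)"
proof (induction A rule: infinite_finite_induct)
  case (insert a A)
  then have "pdiff j (\<lambda>x. f a x + (\<Sum>k\<in>A. f k x)) x =
      pdiff j (f a) x + pdiff j (\<lambda>x. \<Sum>k\<in>A. f k x) x"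
    by (intro pdiff_add poly_fun_sum) auto
  with insert show ?case by simp
qed simp_all

definition lie_deriv :: "nat \<Rightarrow> vfield \<Rightarrow> (pt \<Rightarrow> complex) \<Rightarrow> pt \<Rightarrow> complex" where
  "lie_deriv n V f x = (\<Sum>j=1..n. V j x * pdiff j f x)"

lemma lie_deriv_const [simp]: "lie_deriv n V (\<lambda>x. c) x = 0"
  by (simp add: lie_deriv_def)

lemma lie_deriv_coord: "k \<in> {1..n} \<Longrightarrow> lie_deriv n V (\<lambda>x. x k) x = V k x"
  by (simp add: lie_deriv_def pdiff_coord if_distrib[of "(*) _"] cong: if_cong)

lemma lie_deriv_diff:
  "poly_fun n f \<Longrightarrow> poly_fun n g \<Longrightarrow>
    lie_deriv n V (\<lambda>x. f x - g x) x = lie_deriv n V f x - lie_deriv n V g x"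
  by (simp add: lie_deriv_def pdiff_diff right_diff_distrib sum_subtractf)

lemma lie_deriv_mult:
  "poly_fun n f \<Longrightarrow> poly_fun n g \<Longrightarrow>
    lie_deriv n V (\<lambda>x. f x * g x) x = lie_deriv n V f x * g x + f x * lie_deriv n V g x"
  by (simp add: lie_deriv_def pdiff_mult sum_distrib_left sum_distrib_right sum.distrib algebra_simps)

lemma lie_deriv_power:
  "poly_fun n f \<Longrightarrow> lie_deriv n V (\<lambda>x. f x ^ k) x = of_nat k * f x ^ (k - 1) * lie_deriv n V f x"
  by (simp add: lie_deriv_def pdiff_power sum_distrib_left algebra_simps)

lemma lie_deriv_sum:
  "(\<And>k. k \<in> A \<Longrightarrow> poly_fun n (f k)) \<Longrightarrow>
    lie_deriv n V (\<lambda>x. \<Sum>k\<in>A. f k x) x = (\<Sum>k\<in>A. lie_deriv n V (f k) x)"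
  by (simp add: lie_deriv_def pdiff_sum[of A n f] sum_distrib_left sum.swap[of _ A])

lemma lie_bracket_eq_lie_deriv: "lie_bracket n X Y i x = lie_deriv n X (Y i) x - lie_deriv n Y (X i) x"
  by (simp add: lie_bracket_def lie_deriv_def sum_subtractf)

definition smult_vfield :: "(pt \<Rightarrow> complex) \<Rightarrow> vfield \<Rightarrow> vfield" where
  "smult_vfield \<phi> V i x = \<phi> x * V i x"

lemma lie_deriv_smult_vfield: "lie_deriv n (smult_vfield \<phi> V) f x = \<phi> x * lie_deriv n V f x"
  by (simp add: lie_deriv_def smult_vfield_def sum_distrib_left mult.assoc)

lemma lie_bracket_smult_right:
  assumes "poly_fun n \<phi>" "poly_fun n (Y i)"
  shows "lie_bracket n X (smult_vfield \<phi> Y) i x =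
    lie_deriv n X \<phi> x * Y i x + \<phi> x * lie_bracket n X Y i x"
  using lie_deriv_mult[OF assms, of X x]
  unfolding lie_bracket_eq_lie_deriv lie_deriv_smult_vfield
  by (simp add: smult_vfield_def[abs_def] algebra_simps)

lemma lie_bracket_smult_smult:
  assumes "poly_fun n \<phi>" "poly_fun n \<psi>" "poly_fun n (V i)"
  shows "lie_bracket n (smult_vfield \<phi> V) (smult_vfield \<psi> V) i x =
    (\<phi> x * lie_deriv n V \<psi> x - \<psi> x * lie_deriv n V \<phi> x) * V i x"
  using lie_deriv_mult[OF assms(1,3), of V x] lie_deriv_mult[OF assms(2,3), of V x]
  unfolding lie_bracket_eq_lie_deriv lie_deriv_smult_vfield
  by (simp add: smult_vfield_def[abs_def] algebra_simps)

definition linear_form :: "nat \<Rightarrow> (nat \<Rightarrow> complex) \<Rightarrow> pt \<Rightarrow> complex" where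
  "linear_form n c x = (\<Sum>k=1..n. c k * x k)"

abbreviation wsum :: "nat \<Rightarrow> pt \<Rightarrow> complex" where
  "wsum n \<equiv> linear_form n of_nat"

lemma usum_eq_linear_form: "usum n = linear_form n (\<lambda>_. 1)"
  by (simp add: fun_eq_iff usum_def linear_form_def)

lemma poly_fun_linear_form: "poly_fun n (linear_form n c)"
  unfolding linear_form_def[abs_def] by (intro poly_fun_sum pf_mult pf_const pf_var)

lemma poly_fun_usum: "poly_fun n (usum n)"
  by (simp add: usum_eq_linear_form poly_fun_linear_form)

lemma lie_deriv_linear_form: "lie_deriv n V (linear_form n c) x = (\<Sum>k=1..n. c k * V k x)"
proof -
  have "lie_deriv n V (linear_form n c) x = (\<Sum>k=1..n. lie_deriv n V (\<lambda>x. c k * x k) x)"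
    unfolding linear_form_def[abs_def] by (intro lie_deriv_sum pf_mult pf_const pf_var)
  also have "\<dots> = (\<Sum>k=1..n. c k * V k x)"
    by (intro sum.cong refl) (simp add: lie_deriv_mult pf_const pf_var lie_deriv_coord)
  finally show ?thesis .
qed

lemma lie_deriv_usum: "lie_deriv n V (usum n) x = (\<Sum>k=1..n. V k x)"
  by (simp add: usum_eq_linear_form lie_deriv_linear_form)

definition euler_shift :: "nat \<Rightarrow> nat \<Rightarrow> vfield" where
  "euler_shift n l i x = x i - usum n x * (if i = l then 1 else 0)"

definition Yf_coeff :: "nat \<Rightarrow> nat \<Rightarrow> nat \<Rightarrow> pt \<Rightarrow> complex" where
  "Yf_coeff n l m x = x m * usum n x ^ (l - m - 1)"

lemma Yf_eq_smult_vfield: "Yf n l m = smult_vfield (Yf_coeff n l m) (euler_shift n l)"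
  by (simp add: fun_eq_iff Yf_def smult_vfield_def Yf_coeff_def euler_shift_def)

lemma poly_fun_euler_shift: "i \<in> {1..n} \<Longrightarrow> poly_fun n (euler_shift n l i)"
  unfolding euler_shift_def[abs_def] by (intro poly_fun_diff pf_mult pf_var pf_const poly_fun_usum)

lemma poly_fun_Yf_coeff: "m \<in> {1..n} \<Longrightarrow> poly_fun n (Yf_coeff n l m)"
  unfolding Yf_coeff_def[abs_def] by (intro pf_mult pf_var poly_fun_power poly_fun_usum)

lemma polynomial_vfield_Yf: "m \<in> {1..n} \<Longrightarrow> polynomial_vfield n (Yf n l m)"
  unfolding polynomial_vfield_def Yf_eq_smult_vfield smult_vfield_def[abs_def]
  by (intro ballI pf_mult poly_fun_Yf_coeff poly_fun_euler_shift)

lemma lie_deriv_euler_shift_linear_form: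
  assumes "l \<in> {1..n}"
  shows "lie_deriv n (euler_shift n l) (linear_form n c) x = linear_form n c x - c l * usum n x"
  using assms
  by (simp add: lie_deriv_linear_form euler_shift_def linear_form_def right_diff_distrib sum_subtractf
      if_distrib[of "(*) _"] cong: if_cong)

lemma lie_deriv_euler_shift_usum: "l \<in> {1..n} \<Longrightarrow> lie_deriv n (euler_shift n l) (usum n) x = 0"
  by (simp add: usum_eq_linear_form lie_deriv_euler_shift_linear_form)

lemma lie_deriv_euler_shift_Yf_coeff:
  assumes "l \<in> {1..n}" "m \<in> {1..n}" "m \<noteq> l"
  shows "lie_deriv n (euler_shift n l) (Yf_coeff n l m) x = Yf_coeff n l m x"
  unfolding Yf_coeff_def[abs_def] using assms
  by (simp add: lie_deriv_mult pf_var poly_fun_power poly_fun_usum lie_deriv_power lie_deriv_coord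
      lie_deriv_euler_shift_usum euler_shift_def)

lemma commute_Yf_Yf:
  assumes "l \<in> {1..n}" "a \<in> {1..n}" "b \<in> {1..n}" "a \<noteq> l" "b \<noteq> l"
  shows "commute n (Yf n l a) (Yf n l b)"
  unfolding commute_def Yf_eq_smult_vfield
  using assms
  by (simp add: lie_bracket_smult_smult poly_fun_Yf_coeff poly_fun_euler_shift
      lie_deriv_euler_shift_Yf_coeff)

lemma ladder_eq: "ladder n i x = x i * ((1 + of_nat i) * usum n x - wsum n x)"
proof -
  have "(\<Sum>j=1..n. of_int (1 + int i - int j) * x j) =
      (\<Sum>j=1..n. (1 + of_nat i) * x j - of_nat j * x j)"
    by (intro sum.cong refl) (simp add: algebra_simps)
  then show ?thesis
    by (simp add: ladder_def usum_def linear_form_def sum_subtractf sum_distrib_left)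
qed

lemma lie_deriv_ladder_usum: "lie_deriv n (ladder n) (usum n) x = usum n x ^ 2"
proof -
  have "(\<Sum>i=1..n. ladder n i x) =
      (\<Sum>i=1..n. usum n x * x i + usum n x * (of_nat i * x i) - wsum n x * x i)"
    by (intro sum.cong refl) (simp add: ladder_eq algebra_simps)
  also have "\<dots> = usum n x * usum n x"
    by (simp add: sum.distrib sum_subtractf sum_distrib_left[symmetric] usum_def linear_form_def)
  finally show ?thesis by (simp add: lie_deriv_usum power2_eq_square)
qed

lemma lie_deriv_ladder_Yf_coeff:
  assumes "1 \<le> m" "m < l" "l \<le> n"
  shows "lie_deriv n (ladder n) (Yf_coeff n l m) x =
    (of_nat l * usum n x - wsum n x) * Yf_coeff n l m x"
proof -
  define k where "k = l - m - 1"
  define u where "u = usum n x"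
  have l: "(of_nat l :: complex) = 1 + of_nat m + of_nat k"
    using assms by (simp add: k_def)
  have power: "of_nat k * u ^ (k - 1) * u\<^sup>2 = of_nat k * u ^ k * u"
    by (cases k) (simp_all add: power2_eq_square)
  have "lie_deriv n (ladder n) (Yf_coeff n l m) x =
      ladder n m x * u ^ k + x m * (of_nat k * u ^ (k - 1) * u\<^sup>2)"
    unfolding Yf_coeff_def[abs_def] using assms
    by (simp add: lie_deriv_mult pf_var poly_fun_power poly_fun_usum lie_deriv_power lie_deriv_coord
        lie_deriv_ladder_usum k_def u_def)
  moreover have "Yf_coeff n l m x = x m * u ^ k"
    by (simp add: Yf_coeff_def k_def u_def)
  ultimately show ?thesis
    unfolding power by (simp add: ladder_eq l algebra_simps flip: u_def)
qed

lemma lie_bracket_ladder_euler_shift: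
  assumes "l \<in> {1..n}" "i \<in> {1..n}"
  shows "lie_bracket n (ladder n) (euler_shift n l) i x =
    (wsum n x - of_nat l * usum n x) * euler_shift n l i x"
proof -
  define u where "u = usum n x"
  define w where "w = wsum n x"
  have "lie_deriv n (ladder n) (euler_shift n l i) x = ladder n i x - u\<^sup>2 * (if i = l then 1 else 0)"
    unfolding euler_shift_def[abs_def] using assms
    by (simp add: lie_deriv_diff lie_deriv_mult pf_var pf_mult pf_const poly_fun_usum lie_deriv_coord
        lie_deriv_ladder_usum u_def)
  moreover have "lie_deriv n (euler_shift n l) (ladder n i) x =
      euler_shift n l i x * ((1 + of_nat i) * u - w) + x i * (of_nat l * u - w)"
    unfolding ladder_eq[abs_def] using assms
    by (simp add: lie_deriv_diff lie_deriv_mult pf_var pf_mult pf_const poly_fun_usum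
        poly_fun_linear_form poly_fun_diff lie_deriv_coord lie_deriv_euler_shift_usum
        lie_deriv_euler_shift_linear_form u_def w_def)
  ultimately show ?thesis
    by (simp add: lie_bracket_eq_lie_deriv ladder_eq euler_shift_def power2_eq_square flip: u_def w_def)
      (simp add: algebra_simps)
qed

lemma commute_ladder_Yf:
  assumes "1 \<le> m" "m < l" "l \<le> n"
  shows "commute n (ladder n) (Yf n l m)"
  unfolding commute_def Yf_eq_smult_vfield
  using assms by (simp add: lie_bracket_smult_right poly_fun_Yf_coeff poly_fun_euler_shift
      lie_deriv_ladder_Yf_coeff lie_bracket_ladder_euler_shift algebra_simps)

lemma lin_indep_Yf:
  assumes "l \<le> n"
  shows "lin_indep_vfields n (l - 1) (\<lambda>m. Yf n l m)"
  unfolding lin_indep_vfields_def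
proof (intro allI impI ballI)
  fix c :: "nat \<Rightarrow> complex" and k
  assume vanish: "\<forall>i\<in>{1..n}. \<forall>x. (\<Sum>m=1..l-1. c m * Yf n l m i x) = 0"
    and k: "k \<in> {1..l-1}"
  have "k \<in> {1..n}"
    using k assms by auto
  define e where "e = (\<lambda>j. if j = k then 1 else 0 :: complex)"
  have "usum n e = 1"
    using \<open>k \<in> {1..n}\<close> by (simp add: usum_def e_def)
  then have "(\<Sum>m=1..l-1. c m * Yf n l m k e) = (\<Sum>m=1..l-1. if m = k then c m else 0)"
    using k by (intro sum.cong refl) (auto simp: Yf_def e_def)
  also have "\<dots> = c k"
    using k by simp
  finally show "c k = 0"
    using vanish \<open>k \<in> {1..n}\<close> by simp
qed

theorem corollary1:
  fixes n :: nat
  assumes "n \<ge> 2"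
  shows "(\<forall>m\<in>{1..n-1}. polynomial_vfield n (Yf n n m))
       \<and> (\<forall>m\<in>{1..n-1}. commute n (ladder n) (Yf n n m))
       \<and> lin_indep_vfields n (n-1) (\<lambda>m. Yf n n m)
       \<and> (\<forall>a\<in>{1..n-1}. \<forall>b\<in>{1..n-1}. commute n (Yf n n a) (Yf n n b))"
  using assms lin_indep_Yf[of n n]
  by (auto intro!: polynomial_vfield_Yf commute_ladder_Yf commute_Yf_Yf)

end
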